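(* $\Pi_2\text{-}\mathrm{CSP}(\mathbb{N};\leq) \subseteq \Pi_2\text{-}\mathrm{CSP}(\mathbb{Q};\leq)$.
   Context: Structures over a signature with one binary relation symbol, interpreted as the usual order $\leq$ on $\mathbb{N}$ and $\mathbb{Q}$ respectively. $\Pi_2\text{-}\mathrm{CSP}(\mathcal{A})$ is the set of sentences of the form $\forall\bar x\exists\bar y\,P$, with $P$ a conjunction of atoms (relational atoms and equalities), true in $\mathcal{A}$. *)

theory Defs
  imports Complex_Main
begin

text \<open>Variables of a Pi_2 sentence: Inl i is the universally quantified x_i,
  Inr j is the existentially quantified y_j.\<close>
type_synonym var = "nat + nat"

datatype atom = Rel var var | Equal var var

text \<open>A Pi_2 sentence  forall x. exists y. P  where P is the conjunction of the
  listed atoms (finitely many variables occur).\<close>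
type_synonym pi2_sentence = "atom list"

fun val :: "(nat \<Rightarrow> 'a) \<Rightarrow> (nat \<Rightarrow> 'a) \<Rightarrow> var \<Rightarrow> 'a" where
  "val xs ys (Inl i) = xs i"
| "val xs ys (Inr j) = ys j"

fun atom_sat :: "('a \<Rightarrow> 'a \<Rightarrow> bool) \<Rightarrow> (nat \<Rightarrow> 'a) \<Rightarrow> (nat \<Rightarrow> 'a) \<Rightarrow> atom \<Rightarrow> bool" where
  "atom_sat R xs ys (Rel u v) = R (val xs ys u) (val xs ys v)"
| "atom_sat R xs ys (Equal u v) = (val xs ys u = val xs ys v)"

definition pi2_true :: "('a \<Rightarrow> 'a \<Rightarrow> bool) \<Rightarrow> pi2_sentence \<Rightarrow> bool" where
  "pi2_true R P \<longleftrightarrow> (\<forall>xs. \<exists>ys. \<forall>a \<in> set P. atom_sat R xs ys a)"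

definition Pi2_CSP :: "('a \<Rightarrow> 'a \<Rightarrow> bool) \<Rightarrow> pi2_sentence set" where
  "Pi2_CSP R = {P. pi2_true R P}"

end

theory Submission
  imports Defs
begin

text \<open>Given values for the universal variables in \<open>\<rat>\<close>, pick a monotone map
  \<open>g : \<nat> \<rightarrow> \<rat>\<close> whose image contains the finitely many values that occur, and
  pull them back to \<open>\<nat>\<close> along \<open>g\<close>. A witness for the existential variables in
  \<open>\<nat>\<close> is pushed forward by \<open>g\<close>; monotone maps preserve \<open>\<le>\<close> and functions
  preserve equality, so this is a witness in \<open>\<rat>\<close>.\<close>

fun atom_vars :: "atom \<Rightarrow> var set" where
  "atom_vars (Rel u v) = {u, v}"
| "atom_vars (Equal u v) = {u, v}"

lemma finite_atom_vars [simp]: "finite (atom_vars a)"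
  by (cases a) auto

lemma finite_universal_vars: "finite {i. \<exists>a \<in> set P. Inl i \<in> atom_vars a}"
proof -
  have "{i. \<exists>a \<in> set P. Inl i \<in> atom_vars a} = Inl -` (\<Union>a \<in> set P. atom_vars a)"
    by auto
  then show ?thesis
    by (simp add: finite_vimageI)
qed

lemma atom_sat_cong_universal:
  assumes "\<And>i. Inl i \<in> atom_vars a \<Longrightarrow> xs i = xs' i"
  shows "atom_sat R xs ys a \<longleftrightarrow> atom_sat R xs' ys a"
proof -
  have "val xs ys u = val xs' ys u" if "u \<in> atom_vars a" for u
    using assms that by (cases u) auto
  then show ?thesis
    by (cases a) auto
qed

lemma val_comp: "val (g \<circ> xs) (g \<circ> ys) u = g (val xs ys u)"
  by (cases u) auto

lemma atom_sat_monotone: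
  assumes "monotone S R g" and "atom_sat S xs ys a"
  shows "atom_sat R (g \<circ> xs) (g \<circ> ys) a"
  using assms by (cases a) (auto simp: val_comp monotone_def)

lemma pi2_true_transfer:
  assumes covers: "\<And>V. finite V \<Longrightarrow> \<exists>g. monotone S R g \<and> V \<subseteq> range g"
    and "pi2_true S P"
  shows "pi2_true R P"
  unfolding pi2_true_def
proof
  fix xs
  define I where "I = {i. \<exists>a \<in> set P. Inl i \<in> atom_vars a}"
  obtain g where g: "monotone S R g" and range: "xs ` I \<subseteq> range g"
    using covers[of "xs ` I"] finite_universal_vars by (auto simp: I_def)
  obtain ys where ys: "\<forall>a \<in> set P. atom_sat S (inv g \<circ> xs) ys a"
    using \<open>pi2_true S P\<close> by (auto simp: pi2_true_def)
  have "atom_sat R xs (g \<circ> ys) a" if "a \<in> set P" for a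
  proof -
    have "xs i = (g \<circ> (inv g \<circ> xs)) i" if "Inl i \<in> atom_vars a" for i
    proof -
      have "xs i \<in> range g"
        using range \<open>a \<in> set P\<close> that by (auto simp: I_def)
      then show ?thesis
        by (simp add: f_inv_into_f)
    qed
    then show ?thesis
      using atom_sat_cong_universal atom_sat_monotone[OF g] ys \<open>a \<in> set P\<close> by metis
  qed
  then show "\<exists>ys. \<forall>a \<in> set P. atom_sat R xs ys a"
    by blast
qed

lemma Pi2_CSP_subset_if_monotone_covers:
  assumes "\<And>V. finite V \<Longrightarrow> \<exists>g. monotone S R g \<and> V \<subseteq> range g"
  shows "Pi2_CSP S \<subseteq> Pi2_CSP R"
  using pi2_true_transfer[OF assms] by (auto simp: Pi2_CSP_def)

lemma finite_subset_range_mono_nat: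
  fixes V :: "'a :: linorder set"
  assumes "finite V"
  shows "\<exists>g :: nat \<Rightarrow> 'a. mono g \<and> V \<subseteq> range g"
proof (cases "V = {}")
  case True
  then show ?thesis
    by (auto intro: monoI)
next
  case False
  define xs where "xs = sorted_list_of_set V"
  define g where "g n = xs ! min n (length xs - 1)" for n
  have "sorted xs" "length xs > 0"
    using assms False by (simp_all add: xs_def card_gt_0_iff)
  then have "mono g"
    unfolding g_def by (intro monoI sorted_nth_mono) (auto simp: min.mono min_less_iff_disj)
  moreover have "V \<subseteq> range g"
  proof
    fix v assume "v \<in> V"
    then have "v \<in> set xs"
      using assms by (simp add: xs_def)
    then obtain n where "n < length xs" "xs ! n = v"
      by (auto simp: in_set_conv_nth)
    then show "v \<in> range g"
      by (intro range_eqI[of _ _ n]) (simp add: g_def)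
  qed
  ultimately show ?thesis
    by blast
qed

theorem mainTheorem6:
  shows "Pi2_CSP ((\<le>) :: nat \<Rightarrow> nat \<Rightarrow> bool) \<subseteq> Pi2_CSP ((\<le>) :: rat \<Rightarrow> rat \<Rightarrow> bool)"
  by (rule Pi2_CSP_subset_if_monotone_covers) (use finite_subset_range_mono_nat in \<open>auto simp: mono_def monotone_def\<close>)

end
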